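(* Let $d$ be a positive integer, $\Omega(d)=\{\ket{\varphi}\bra{\varphi}:\ket{\varphi}\in\mathbb{C}^d,\ \langle\varphi|\varphi\rangle=1\}$, $\mu$ a Borel probability measure on $\Omega(d)$ and $f:\Omega(d)\to\mathbb{R}$ a continuous function such that \[ \int\mathrm{d}\mu(\varphi)\,f(\varphi)\,\ket{\varphi}\bra{\varphi}^{\otimes n}\ge 0\quad\text{for all } n\in\mathbb{N}. \] Then $f$ is nonnegative $\mu$-almost everywhere.
   Context: Points $\varphi\in\Omega(d)$ are identified with projectors $\ket{\varphi}\bra{\varphi}$; $\ge0$ means positive semidefinite as an operator on $(\mathbb{C}^d)^{\otimes n}$. *)

theory Defs
  imports "HOL-Analysis.Analysis" "HOL-Probability.Probability"
begin

text \<open>Dimension d is CARD('d) for a finite type 'd. Points of Omega(d) are the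
rank-one projectors |phi><phi|, represented as d x d complex matrices.\<close>

definition ket_bra :: "complex^'d \<Rightarrow> complex^'d^'d" where
  "ket_bra v = (\<chi> i j. v $ i * cnj (v $ j))"

definition pure_states :: "(complex^'d^'d::finite) set" where
  "pure_states = {P. \<exists>v::complex^'d. (\<Sum>i\<in>UNIV. cnj (v $ i) * v $ i) = 1 \<and> P = ket_bra v}"

text \<open>Multi-indices for the computational basis of (C^d)^{tensor n}.\<close>
definition multi_idx :: "nat \<Rightarrow> ('d::finite) list set" where
  "multi_idx n = {xs. length xs = n}"

definition tensor_pow_entry :: "nat \<Rightarrow> complex^'d^'d \<Rightarrow> 'd list \<Rightarrow> 'd list \<Rightarrow> complex" where
  "tensor_pow_entry n P is js = (\<Prod>k<n. P $ (is ! k) $ (js ! k))"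

definition psd_tensor :: "nat \<Rightarrow> ('d::finite list \<Rightarrow> 'd list \<Rightarrow> complex) \<Rightarrow> bool" where
  "psd_tensor n A \<longleftrightarrow> (\<forall>\<psi> :: 'd list \<Rightarrow> complex.
     (let q = (\<Sum>is\<in>multi_idx n. \<Sum>js\<in>multi_idx n. cnj (\<psi> is) * A is js * \<psi> js)
      in Im q = 0 \<and> Re q \<ge> 0))"

end

(* Fix a pure state phi0 = |u><u| at which f is negative. Testing the positivity hypothesis
   on the product vector u^(tensor n) gives 0 <= integral of f(phi) <u|phi|u>^n. The weight
   <u|phi|u> = 1 - |phi - phi0|^2 / 2 is close to 1 only near phi0, where f is negative by
   continuity, so as n grows the contribution of a small ball around phi0 would dominate
   unless that ball is null. Lindeloef's theorem turns these local null sets into a single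
   null set containing all points where f is negative. *)

theory Submission
  imports Defs
begin

lemma sum_lists_length_prod:
  "(\<Sum>xs\<in>{xs::'a::finite list. length xs = n}. \<Prod>k<n. h k (xs ! k))
     = (\<Prod>k<n. \<Sum>x\<in>UNIV. (h k x :: 'b::comm_semiring_1))"
proof (induction n arbitrary: h)
  case 0
  then show ?case by simp
next
  case (Suc n)
  let ?L = "{xs::'a list. length xs = n}"
  have lists_Suc: "{xs::'a list. length xs = Suc n} = (\<lambda>(x, xs). x # xs) ` (UNIV \<times> ?L)"
    by (auto simp: image_iff length_Suc_conv)
  have inj: "inj_on (\<lambda>(x, xs). x # xs) (UNIV \<times> ?L)"
    by (auto simp: inj_on_def)
  have "(\<Sum>xs\<in>{xs. length xs = Suc n}. \<Prod>k<Suc n. h k (xs ! k))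
      = (\<Sum>x\<in>UNIV. \<Sum>xs\<in>?L. h 0 x * (\<Prod>k<n. h (Suc k) (xs ! k)))"
    unfolding lists_Suc sum.reindex[OF inj] sum.cartesian_product
    by (simp add: prod.lessThan_Suc_shift case_prod_beta del: prod.lessThan_Suc)
  also have "\<dots> = (\<Sum>x\<in>UNIV. h 0 x) * (\<Prod>k<n. \<Sum>x\<in>UNIV. h (Suc k) x)"
    using Suc.IH[of "\<lambda>k. h (Suc k)"] by (simp add: sum_distrib_right flip: sum_distrib_left)
  also have "\<dots> = (\<Prod>k<Suc n. \<Sum>x\<in>UNIV. h k x)"
    by (simp only: prod.lessThan_Suc_shift)
  finally show ?case .
qed

lemma norm_vec_power2: "(norm (x :: 'a::real_normed_vector^'n))\<^sup>2 = (\<Sum>i\<in>UNIV. (norm (x $ i))\<^sup>2)"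
  unfolding norm_vec_def L2_set_def by (simp add: sum_nonneg)

lemma integrable_continuous_on_compact_space:
  fixes h :: "'a::topological_space \<Rightarrow> 'b::{banach,second_countable_topology}"
  assumes "finite_measure \<mu>" "space \<mu> = S" "sets \<mu> = sets (restrict_space borel S)"
    and "compact S" "continuous_on S h"
  shows "integrable \<mu> h"
proof -
  interpret finite_measure \<mu> by fact
  obtain B where B: "\<And>x. x \<in> S \<Longrightarrow> norm (h x) \<le> B"
    using compact_imp_bounded[OF compact_continuous_image[OF assms(5,4)]]
    by (meson bounded_iff imageI)
  have "h \<in> borel_measurable \<mu>"
    using borel_measurable_continuous_on_restrict[OF assms(5)] measurable_cong_sets[OF assms(3) refl]
    by blast
  then show ?thesis
    using B assms(2) by (intro integrable_const_bound[of _ B]) auto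
qed

lemma mult_power_le_diff_of_bool:
  fixes y s a b M \<epsilon> :: real
  assumes "\<bar>y\<bar> \<le> M" "0 \<le> s" "0 \<le> a" "0 \<le> b" "0 \<le> \<epsilon>"
    and "P \<Longrightarrow> y \<le> - \<epsilon> \<and> b \<le> s"
    and "\<not> P \<Longrightarrow> y \<le> 0 \<or> s \<le> a"
  shows "y * s ^ n \<le> M * a ^ n - \<epsilon> * b ^ n * of_bool P"
proof -
  have "0 \<le> s ^ n" "0 \<le> M * a ^ n"
    using assms(1-3) by auto
  show ?thesis
  proof (cases P)
    case True
    then have "y \<le> - \<epsilon>" "b ^ n \<le> s ^ n"
      using assms(4,6) by (auto intro: power_mono)
    have "y * s ^ n \<le> - \<epsilon> * s ^ n"
      using \<open>y \<le> - \<epsilon>\<close> \<open>0 \<le> s ^ n\<close> by (rule mult_right_mono)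
    also have "\<dots> \<le> - \<epsilon> * b ^ n"
      using \<open>b ^ n \<le> s ^ n\<close> \<open>0 \<le> \<epsilon>\<close> by (simp add: mult_left_mono)
    finally show ?thesis using True \<open>0 \<le> M * a ^ n\<close> by simp
  next
    case False
    have "y * s ^ n \<le> M * a ^ n"
      using assms(7)[OF False]
    proof
      assume "y \<le> 0"
      then have "y * s ^ n \<le> 0" using \<open>0 \<le> s ^ n\<close> by (rule mult_nonpos_nonneg)
      then show ?thesis using \<open>0 \<le> M * a ^ n\<close> by linarith
    next
      assume "s \<le> a"
      have "y * s ^ n \<le> \<bar>y\<bar> * s ^ n" using \<open>0 \<le> s ^ n\<close> by (simp add: mult_right_mono)
      also have "\<dots> \<le> M * a ^ n"
        using assms(1,2) \<open>s \<le> a\<close> by (intro mult_mono power_mono) auto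
      finally show ?thesis .
    qed
    then show ?thesis using False by simp
  qed
qed

lemma null_sets_if_moments_nonneg:
  fixes f t :: "'a \<Rightarrow> real"
  assumes "finite_measure \<mu>" "A \<in> sets \<mu>"
    and integrable: "\<And>n. integrable \<mu> (\<lambda>x. f x * t x ^ n)"
    and moments: "\<And>n. 0 \<le> integral\<^sup>L \<mu> (\<lambda>x. f x * t x ^ n)"
    and bound: "\<And>x. x \<in> space \<mu> \<Longrightarrow> \<bar>f x\<bar> \<le> M"
    and t_nonneg: "\<And>x. x \<in> space \<mu> \<Longrightarrow> 0 \<le> t x"
    and on_A: "\<And>x. x \<in> A \<Longrightarrow> f x \<le> - \<epsilon> \<and> b \<le> t x"
    and off_A: "\<And>x. x \<in> space \<mu> - A \<Longrightarrow> f x \<le> 0 \<or> t x \<le> a"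
    and "0 \<le> a" "a < b" "0 < \<epsilon>"
  shows "A \<in> null_sets \<mu>"
proof -
  interpret finite_measure \<mu> by fact
  have A_space: "A \<subseteq> space \<mu>" using assms(2) by (rule sets.sets_into_space)
  have "b > 0" using \<open>0 \<le> a\<close> \<open>a < b\<close> by simp
  define C where "C = M * measure \<mu> (space \<mu>)"
  have bound_n: "\<epsilon> * b ^ n * measure \<mu> A \<le> C * a ^ n" for n
  proof -
    have pointwise: "f x * t x ^ n \<le> M * a ^ n - \<epsilon> * b ^ n * indicator A x" if "x \<in> space \<mu>" for x
      unfolding indicator_def
      using that A_space \<open>0 \<le> a\<close> \<open>b > 0\<close> \<open>0 < \<epsilon>\<close>
      by (intro mult_power_le_diff_of_bool bound t_nonneg on_A off_A) auto
    have "0 \<le> integral\<^sup>L \<mu> (\<lambda>x. f x * t x ^ n)" by (rule moments)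
    also have "\<dots> \<le> integral\<^sup>L \<mu> (\<lambda>x. M * a ^ n - \<epsilon> * b ^ n * indicator A x)"
      using assms(2) pointwise
      by (intro integral_mono integrable Bochner_Integration.integrable_diff
          Bochner_Integration.integrable_mult_right integrable_real_indicator)
        (auto simp: emeasure_eq_measure)
    also have "\<dots> = M * a ^ n * measure \<mu> (space \<mu>) - \<epsilon> * b ^ n * measure \<mu> A"
      using assms(2) A_space
      by (subst Bochner_Integration.integral_diff) (auto simp: emeasure_eq_measure Int_absorb2)
    finally show ?thesis unfolding C_def by (simp add: algebra_simps)
  qed
  have "measure \<mu> A \<le> 0"
  proof (rule LIMSEQ_le_const)
    show "(\<lambda>n. (C / \<epsilon>) * (a / b) ^ n) \<longlonglongrightarrow> 0"
      using \<open>0 \<le> a\<close> \<open>a < b\<close> by (intro tendsto_mult_right_zero LIMSEQ_power_zero) simp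
    have "measure \<mu> A \<le> (C / \<epsilon>) * (a / b) ^ n" for n
      using bound_n[of n] \<open>0 < \<epsilon>\<close> \<open>b > 0\<close> by (simp add: power_divide field_simps)
    then show "\<exists>N. \<forall>n\<ge>N. measure \<mu> A \<le> (C / \<epsilon>) * (a / b) ^ n" by blast
  qed
  then show ?thesis
    using assms(2) by (simp add: emeasure_eq_measure null_sets_def measure_le_0_iff)
qed

lemma AE_I_locally_null:
  fixes \<mu> :: "'a::second_countable_topology measure"
  assumes "\<And>x. x \<in> space \<mu> \<Longrightarrow> \<not> P x \<Longrightarrow> \<exists>U. open U \<and> x \<in> U \<and> U \<inter> space \<mu> \<in> null_sets \<mu>"
  shows "AE x in \<mu>. P x"
proof -
  define \<F> where "\<F> = {U. open U \<and> U \<inter> space \<mu> \<in> null_sets \<mu>}"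
  obtain \<G> where \<G>: "\<G> \<subseteq> \<F>" "countable \<G>" "\<Union>\<G> = \<Union>\<F>"
    using Lindelof[of \<F>] unfolding \<F>_def by blast
  have "(\<Union>U\<in>\<G>. U \<inter> space \<mu>) \<in> null_sets \<mu>"
    using \<G>(1,2) unfolding \<F>_def by (intro null_sets_UN') auto
  moreover have "{x \<in> space \<mu>. \<not> P x} \<subseteq> (\<Union>U\<in>\<G>. U \<inter> space \<mu>)"
  proof
    fix x assume "x \<in> {x \<in> space \<mu>. \<not> P x}"
    then obtain U where "x \<in> U" "U \<in> \<F>" "x \<in> space \<mu>"
      using assms unfolding \<F>_def by blast
    then show "x \<in> (\<Union>U\<in>\<G>. U \<inter> space \<mu>)" using \<G>(3) by blast
  qed
  ultimately show ?thesis by (rule AE_I')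
qed

definition quad_form :: "complex^'d \<Rightarrow> complex^'d^'d \<Rightarrow> complex" where
  "quad_form u P = (\<Sum>i\<in>UNIV. \<Sum>j\<in>UNIV. cnj (u $ i) * P $ i $ j * u $ j)"

definition tensor_pow_vec :: "nat \<Rightarrow> complex^'d \<Rightarrow> 'd list \<Rightarrow> complex" where
  "tensor_pow_vec n u xs = (\<Prod>k<n. u $ (xs ! k))"

lemma quad_form_tensor_pow:
  "(\<Sum>xs\<in>multi_idx n. \<Sum>ys\<in>multi_idx n.
      cnj (tensor_pow_vec n u xs) * tensor_pow_entry n P xs ys * tensor_pow_vec n u ys)
    = quad_form u (P :: complex^'d::finite^'d) ^ n"
proof -
  have "(\<Sum>xs\<in>multi_idx n. \<Sum>ys\<in>multi_idx n.
      cnj (tensor_pow_vec n u xs) * tensor_pow_entry n P xs ys * tensor_pow_vec n u ys)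
    = (\<Sum>xs\<in>multi_idx n. \<Sum>ys\<in>multi_idx n. \<Prod>k<n. cnj (u $ (xs ! k)) * P $ (xs ! k) $ (ys ! k) * u $ (ys ! k))"
    unfolding tensor_pow_vec_def tensor_pow_entry_def by (simp add: prod.distrib)
  also have "\<dots> = (\<Sum>xs\<in>multi_idx n. \<Prod>k<n. \<Sum>j\<in>UNIV. cnj (u $ (xs ! k)) * P $ (xs ! k) $ j * u $ j)"
    unfolding multi_idx_def by (intro sum.cong refl) (rule sum_lists_length_prod)
  also have "\<dots> = quad_form u P ^ n"
    unfolding multi_idx_def quad_form_def by (subst sum_lists_length_prod) simp
  finally show ?thesis .
qed

lemma quad_form_ket_bra:
  "quad_form u (ket_bra v) = of_real ((cmod (\<Sum>i\<in>UNIV. cnj (u $ i) * v $ i))\<^sup>2)"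
proof -
  have "quad_form u (ket_bra v) = (\<Sum>i\<in>UNIV. cnj (u $ i) * v $ i) * (\<Sum>j\<in>UNIV. cnj (v $ j) * u $ j)"
    unfolding quad_form_def ket_bra_def sum_product by (simp add: algebra_simps)
  also have "\<dots> = (\<Sum>i\<in>UNIV. cnj (u $ i) * v $ i) * cnj (\<Sum>i\<in>UNIV. cnj (u $ i) * v $ i)"
    by (simp add: mult.commute)
  finally show ?thesis by (simp only: complex_norm_square)
qed

lemma sum_cnj_mult_self: "(\<Sum>i\<in>UNIV. cnj (v $ i) * v $ i) = of_real ((norm (v :: complex^'d))\<^sup>2)"
  unfolding norm_vec_power2 of_real_sum complex_norm_square by (simp add: mult.commute)

lemma pure_states_eq_image_sphere: "pure_states = ket_bra ` sphere (0 :: complex^'d::finite) 1"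
  unfolding pure_states_def sum_cnj_mult_self of_real_eq_1_iff by (auto simp: image_def abs_square_eq_1)

lemma compact_pure_states: "compact (pure_states :: (complex^'d::finite^'d) set)"
  unfolding pure_states_eq_image_sphere ket_bra_def
  by (intro compact_continuous_image continuous_intros) simp

lemma dist_ket_bra_power2:
  fixes u v :: "complex^'d::finite"
  assumes "norm u = 1" "norm v = 1"
  shows "(dist (ket_bra v) (ket_bra u))\<^sup>2 = 2 - 2 * (cmod (\<Sum>i\<in>UNIV. cnj (u $ i) * v $ i))\<^sup>2"
proof -
  define c where "c = (\<Sum>i\<in>UNIV. cnj (u $ i) * v $ i)"
  have nu: "(\<Sum>i\<in>UNIV. cnj (u $ i) * u $ i) = 1" and nv: "(\<Sum>i\<in>UNIV. cnj (v $ i) * v $ i) = 1"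
    using assms by (simp_all add: sum_cnj_mult_self)
  have cnj_c: "(\<Sum>i\<in>UNIV. cnj (v $ i) * u $ i) = cnj c"
    unfolding c_def by (simp add: mult.commute)
  define z where "z i j = v $ i * cnj (v $ j) - u $ i * cnj (u $ j)" for i j
  have "(dist (ket_bra v) (ket_bra u))\<^sup>2 = (\<Sum>i\<in>UNIV. \<Sum>j\<in>UNIV. (norm (z i j))\<^sup>2)"
    unfolding dist_norm norm_vec_power2 z_def ket_bra_def by simp
  then have "complex_of_real ((dist (ket_bra v) (ket_bra u))\<^sup>2) = (\<Sum>i\<in>UNIV. \<Sum>j\<in>UNIV. z i j * cnj (z i j))"
    by (simp only: of_real_sum complex_norm_square)
  also have "\<dots> = (\<Sum>i\<in>UNIV. \<Sum>j\<in>UNIV. (cnj (v $ i) * v $ i) * (cnj (v $ j) * v $ j)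
       - (cnj (u $ i) * v $ i) * (cnj (v $ j) * u $ j) - (cnj (v $ i) * u $ i) * (cnj (u $ j) * v $ j)
       + (cnj (u $ i) * u $ i) * (cnj (u $ j) * u $ j))"
    unfolding z_def by (intro sum.cong refl) (simp add: algebra_simps)
  also have "\<dots> = 1 - c * cnj c - cnj c * c + 1"
    by (simp add: sum_subtractf sum.distrib nu nv cnj_c flip: sum_product c_def)
  also have "\<dots> = of_real (2 - 2 * (cmod c)\<^sup>2)"
    using complex_norm_square[of c] by (simp add: algebra_simps)
  finally show ?thesis unfolding c_def of_real_eq_iff .
qed

lemma quad_form_pure_state:
  assumes "\<phi> \<in> pure_states"
  shows "quad_form u \<phi> = of_real (Re (quad_form u \<phi>))" "0 \<le> Re (quad_form u \<phi>)"
  using assms unfolding pure_states_def by (auto simp: quad_form_ket_bra)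

lemma dist_ket_bra_pure_state_power2:
  assumes "norm u = 1" "\<phi> \<in> pure_states"
  shows "(dist \<phi> (ket_bra u))\<^sup>2 = 2 - 2 * Re (quad_form u \<phi>)"
proof -
  obtain v where "norm v = 1" and "\<phi> = ket_bra v"
    using assms(2) unfolding pure_states_eq_image_sphere by auto
  then show ?thesis
    using dist_ket_bra_power2[OF assms(1)] by (simp add: quad_form_ket_bra)
qed

context
  fixes \<mu> :: "(complex^'d^'d::finite) measure"
    and f :: "complex^'d^'d \<Rightarrow> real"
  assumes prob: "prob_space \<mu>"
    and space: "space \<mu> = pure_states"
    and sets: "sets \<mu> = sets (restrict_space borel pure_states)"
    and f_cont: "continuous_on pure_states f"
begin

lemma integrable_continuous_on_pure_states:
  fixes h :: "complex^'d^'d \<Rightarrow> 'b::{banach,second_countable_topology}"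
  assumes "continuous_on pure_states h"
  shows "integrable \<mu> h"
  using prob_space.axioms(1)[OF prob] space sets compact_pure_states assms
  by (rule integrable_continuous_on_compact_space)

lemma integral_quad_form_tensor_pow_nonneg:
  assumes psd: "psd_tensor n
           (\<lambda>is js. integral\<^sup>L \<mu> (\<lambda>\<phi>. complex_of_real (f \<phi>) * tensor_pow_entry n \<phi> is js))"
  shows "0 \<le> integral\<^sup>L \<mu> (\<lambda>\<phi>. f \<phi> * Re (quad_form u \<phi>) ^ n)"
proof -
  define \<psi> where "\<psi> = tensor_pow_vec n u"
  define F where "F xs ys \<phi> = cnj (\<psi> xs) * (complex_of_real (f \<phi>) * tensor_pow_entry n \<phi> xs ys) * \<psi> ys"
    for xs ys \<phi>
  have [simp]: "integrable \<mu> (F xs ys)" for xs ys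
    unfolding F_def tensor_pow_entry_def
    by (intro integrable_continuous_on_pure_states continuous_intros f_cont)
  define q where "q = (\<Sum>xs\<in>multi_idx n. \<Sum>ys\<in>multi_idx n. cnj (\<psi> xs)
      * integral\<^sup>L \<mu> (\<lambda>\<phi>. complex_of_real (f \<phi>) * tensor_pow_entry n \<phi> xs ys) * \<psi> ys)"
  have "0 \<le> Re q"
    using psd unfolding psd_tensor_def Let_def q_def by blast
  have "q = (\<Sum>xs\<in>multi_idx n. \<Sum>ys\<in>multi_idx n. integral\<^sup>L \<mu> (F xs ys))"
    unfolding q_def F_def by simp
  also have "\<dots> = integral\<^sup>L \<mu> (\<lambda>\<phi>. \<Sum>xs\<in>multi_idx n. \<Sum>ys\<in>multi_idx n. F xs ys \<phi>)"
    by (simp add: integrable_sum)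
  also have "\<dots> = integral\<^sup>L \<mu> (\<lambda>\<phi>. complex_of_real (f \<phi> * Re (quad_form u \<phi>) ^ n))"
  proof (rule Bochner_Integration.integral_cong[OF refl])
    fix \<phi> assume "\<phi> \<in> space \<mu>"
    then have "quad_form u \<phi> = of_real (Re (quad_form u \<phi>))"
      using space quad_form_pure_state by blast
    moreover have "(\<Sum>xs\<in>multi_idx n. \<Sum>ys\<in>multi_idx n. F xs ys \<phi>) = of_real (f \<phi>) * quad_form u \<phi> ^ n"
      unfolding F_def \<psi>_def quad_form_tensor_pow[symmetric] sum_distrib_left
      by (intro sum.cong refl) (simp add: mult_ac)
    ultimately show "(\<Sum>xs\<in>multi_idx n. \<Sum>ys\<in>multi_idx n. F xs ys \<phi>)
        = complex_of_real (f \<phi> * Re (quad_form u \<phi>) ^ n)"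
      by (metis of_real_mult of_real_power)
  qed
  also have "\<dots> = of_real (integral\<^sup>L \<mu> (\<lambda>\<phi>. f \<phi> * Re (quad_form u \<phi>) ^ n))"
    by (rule integral_complex_of_real)
  finally show ?thesis using \<open>0 \<le> Re q\<close> by simp
qed

lemma ball_pure_states_null_if_negative:
  assumes psd: "\<And>n::nat. psd_tensor n
           (\<lambda>is js. integral\<^sup>L \<mu> (\<lambda>\<phi>. complex_of_real (f \<phi>) * tensor_pow_entry n \<phi> is js))"
    and "norm u = 1" "0 < r" "r \<le> 1" "0 < \<epsilon>"
    and negative: "\<And>\<phi>. \<phi> \<in> pure_states \<Longrightarrow> dist \<phi> (ket_bra u) < r \<Longrightarrow> f \<phi> \<le> - \<epsilon>"
  shows "ball (ket_bra u) (r / 2) \<inter> pure_states \<in> null_sets \<mu>"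
proof -
  obtain M where M: "\<And>\<phi>. \<phi> \<in> pure_states \<Longrightarrow> \<bar>f \<phi>\<bar> \<le> M"
    using compact_imp_bounded[OF compact_continuous_image[OF f_cont compact_pure_states]]
    by (metis bounded_iff imageI real_norm_def)
  have dist_eq: "(dist \<phi> (ket_bra u))\<^sup>2 = 2 - 2 * Re (quad_form u \<phi>)" if "\<phi> \<in> pure_states" for \<phi>
    using \<open>norm u = 1\<close> that by (rule dist_ket_bra_pure_state_power2)
  let ?A = "ball (ket_bra u) (r / 2) \<inter> pure_states"
  show ?thesis
  proof (rule null_sets_if_moments_nonneg[where t = "\<lambda>\<phi>. Re (quad_form u \<phi>)" and M = M
        and a = "1 - r\<^sup>2 / 2" and b = "1 - r\<^sup>2 / 8"])
    show "finite_measure \<mu>"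
      using prob by (rule prob_space.axioms(1))
    show "?A \<in> sets \<mu>"
      unfolding sets sets_restrict_space by auto
    show "integrable \<mu> (\<lambda>\<phi>. f \<phi> * Re (quad_form u \<phi>) ^ n)" for n
      unfolding quad_form_def by (intro integrable_continuous_on_pure_states continuous_intros f_cont)
    show "0 \<le> integral\<^sup>L \<mu> (\<lambda>\<phi>. f \<phi> * Re (quad_form u \<phi>) ^ n)" for n
      by (rule integral_quad_form_tensor_pow_nonneg[OF psd])
    show "\<bar>f \<phi>\<bar> \<le> M" if "\<phi> \<in> space \<mu>" for \<phi>
      using that space M by simp
    show "0 \<le> Re (quad_form u \<phi>)" if "\<phi> \<in> space \<mu>" for \<phi>
      using that space quad_form_pure_state by simp
    show "f \<phi> \<le> - \<epsilon> \<and> 1 - r\<^sup>2 / 8 \<le> Re (quad_form u \<phi>)" if "\<phi> \<in> ?A" for \<phi>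
    proof
      have "\<phi> \<in> pure_states" "dist \<phi> (ket_bra u) < r / 2"
        using that by (auto simp: dist_commute)
      then show "f \<phi> \<le> - \<epsilon>"
        using \<open>0 < r\<close> by (intro negative) auto
      have "(dist \<phi> (ket_bra u))\<^sup>2 < (r / 2)\<^sup>2"
        using \<open>dist \<phi> (ket_bra u) < r / 2\<close> by (intro power_strict_mono) auto
      then show "1 - r\<^sup>2 / 8 \<le> Re (quad_form u \<phi>)"
        using dist_eq[OF \<open>\<phi> \<in> pure_states\<close>] by (simp add: power_divide)
    qed
    show "f \<phi> \<le> 0 \<or> Re (quad_form u \<phi>) \<le> 1 - r\<^sup>2 / 2" if "\<phi> \<in> space \<mu> - ?A" for \<phi>
    proof (cases "dist \<phi> (ket_bra u) < r")
      case True
      then show ?thesis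
        using that space negative[of \<phi>] \<open>0 < \<epsilon>\<close> by auto
    next
      case False
      then have "r\<^sup>2 \<le> (dist \<phi> (ket_bra u))\<^sup>2"
        using \<open>0 < r\<close> by (simp add: power_mono)
      then show ?thesis
        using that space dist_eq[of \<phi>] by simp
    qed
    show "0 \<le> 1 - r\<^sup>2 / 2"
      using \<open>0 < r\<close> \<open>r \<le> 1\<close> power_le_one[of r 2] by simp
    show "1 - r\<^sup>2 / 2 < 1 - r\<^sup>2 / 8"
      using \<open>0 < r\<close> by simp
    show "0 < \<epsilon>" by fact
  qed
qed

lemma negative_point_has_null_neighbourhood:
  assumes psd: "\<And>n::nat. psd_tensor n
           (\<lambda>is js. integral\<^sup>L \<mu> (\<lambda>\<phi>. complex_of_real (f \<phi>) * tensor_pow_entry n \<phi> is js))"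
    and "\<phi>0 \<in> pure_states" "f \<phi>0 < 0"
  shows "\<exists>U. open U \<and> \<phi>0 \<in> U \<and> U \<inter> pure_states \<in> null_sets \<mu>"
proof -
  obtain u where "norm u = 1" and \<phi>0: "\<phi>0 = ket_bra u"
    using \<open>\<phi>0 \<in> pure_states\<close> unfolding pure_states_eq_image_sphere by auto
  define \<epsilon> where "\<epsilon> = - f \<phi>0 / 2"
  have "0 < \<epsilon>" using \<open>f \<phi>0 < 0\<close> unfolding \<epsilon>_def by simp
  then obtain d where "0 < d" and d: "\<forall>\<phi>\<in>pure_states. dist \<phi> \<phi>0 < d \<longrightarrow> dist (f \<phi>) (f \<phi>0) < \<epsilon>"
    using f_cont \<open>\<phi>0 \<in> pure_states\<close> unfolding continuous_on_iff by blast
  define r where "r = min d 1"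
  have "0 < r" "r \<le> 1" using \<open>0 < d\<close> unfolding r_def by auto
  have "f \<phi> \<le> - \<epsilon>" if "\<phi> \<in> pure_states" "dist \<phi> (ket_bra u) < r" for \<phi>
    using d that unfolding \<phi>0 \<epsilon>_def dist_real_def r_def by fastforce
  with \<open>0 < r\<close> \<open>r \<le> 1\<close> \<open>0 < \<epsilon>\<close> have "ball \<phi>0 (r / 2) \<inter> pure_states \<in> null_sets \<mu>"
    unfolding \<phi>0 by (intro ball_pure_states_null_if_negative[OF psd \<open>norm u = 1\<close>])
  then show ?thesis
    using \<open>0 < r\<close> by (intro exI[of _ "ball \<phi>0 (r / 2)"]) auto
qed

end

theorem corollary2:
  fixes \<mu> :: "(complex^'d^'d::finite) measure"
    and f :: "complex^'d^'d \<Rightarrow> real"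
  assumes "prob_space \<mu>"
    and "space \<mu> = pure_states"
    and "sets \<mu> = sets (restrict_space borel pure_states)"
    and "continuous_on pure_states f"
    and "\<And>n::nat. psd_tensor n
           (\<lambda>is js. integral\<^sup>L \<mu> (\<lambda>\<phi>. complex_of_real (f \<phi>) * tensor_pow_entry n \<phi> is js))"
  shows "AE \<phi> in \<mu>. f \<phi> \<ge> 0"
proof (rule AE_I_locally_null)
  fix \<phi> assume "\<phi> \<in> space \<mu>" "\<not> f \<phi> \<ge> 0"
  then show "\<exists>U. open U \<and> \<phi> \<in> U \<and> U \<inter> space \<mu> \<in> null_sets \<mu>"
    using negative_point_has_null_neighbourhood[OF assms] assms(2) by simp
qed

end
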